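(* Let $\psi:\mathsf F\Rightarrow\mathsf G$ be a morphism between constructible cosheaves with a common critical set $S=\{a_0<a_1<\dots<a_n\}$, and set $a_{-1}=-\infty$, $a_{n+1}=+\infty$. If $\psi_I$ is a bijection for every interval of the form $I=(a_{i-1},a_{i+1})$ ($0\le i\le n$) and $I=(a_i,a_{i+1})$ ($0\le i\le n-1$), then $\psi$ is an isomorphism of cosheaves (a natural isomorphism).
   Context: $\mathbf{Int}$ is the category whose objects are the open intervals of $\mathbb{R}$ (including unbounded ones and the empty set) and whose morphisms are inclusions. A pre-cosheaf is a functor $\mathsf F:\mathbf{Int}\to\mathbf{Set}$; $\mathsf F[I\subseteq J]$ denotes the image of an inclusion; morphisms are natural transformations. A cosheaf is a pre-cosheaf such that for every open interval $U$ and every family $(I_p)$ of open intervals with union $U$, $\mathsf F(U)$ with the maps $\mathsf F[I_p\subseteq U]$ is the colimit of $\coprod_{p,q}\mathsf F(I_p\cap I_q)\rightrightarrows\coprod_p\mathsf F(I_p)$ (arrows induced by the inclusions $I_p\cap I_q\subseteq I_p$, $I_p\cap I_q\subseteq I_q$). A (pre-)cosheaf is constructible if every $\mathsf F(I)$ is finite and there is a finite $S\subset\mathbb R$ such that $\mathsf F[I\subseteq J]$ is a bijection whenever $I\subseteq J$ and $I\cap S=J\cap S$, and $\mathsf F(I)=\emptyset$ whenever $I\subseteq(-\infty,\min S)$ or $I\subseteq(\max S,\infty)$. *)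

theory Defs
  imports "HOL-Library.Extended_Real"
begin

definition oint :: "ereal \<Rightarrow> ereal \<Rightarrow> real set" where
  "oint l u = {x. l < ereal x \<and> ereal x < u}"

definition is_oint :: "real set \<Rightarrow> bool" where
  "is_oint I \<longleftrightarrow> (\<exists>l u. I = oint l u)"

text \<open>A pre-cosheaf on Int: an object map F (values are subsets of a type 'a)
  and a map Fm with Fm I J = F[I \<subseteq> J], satisfying functoriality.\<close>
definition precosheaf :: "(real set \<Rightarrow> 'a set) \<Rightarrow> (real set \<Rightarrow> real set \<Rightarrow> 'a \<Rightarrow> 'a) \<Rightarrow> bool" where
  "precosheaf F Fm \<longleftrightarrow>
     (\<forall>I J. is_oint I \<and> is_oint J \<and> I \<subseteq> J \<longrightarrow> (\<forall>x\<in>F I. Fm I J x \<in> F J)) \<and>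
     (\<forall>I. is_oint I \<longrightarrow> (\<forall>x\<in>F I. Fm I I x = x)) \<and>
     (\<forall>I J K. is_oint I \<and> is_oint J \<and> is_oint K \<and> I \<subseteq> J \<and> J \<subseteq> K \<longrightarrow>
        (\<forall>x\<in>F I. Fm J K (Fm I J x) = Fm I K x))"

text \<open>Generating relation of the coequalizer of
  \<open>\<Sum>_{p,q} F(I_p \<inter> I_q) \<rightrightarrows> \<Sum>_p F(I_p)\<close> on the disjoint union
  (elements tagged by their interval).\<close>
definition glue_rel :: "(real set \<Rightarrow> 'a set) \<Rightarrow> (real set \<Rightarrow> real set \<Rightarrow> 'a \<Rightarrow> 'a)
    \<Rightarrow> real set set \<Rightarrow> ((real set \<times> 'a) \<times> (real set \<times> 'a)) set" where
  "glue_rel F Fm \<J> = {((I, Fm (I \<inter> J) I z), (J, Fm (I \<inter> J) J z)) | I J z.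
                        I \<in> \<J> \<and> J \<in> \<J> \<and> z \<in> F (I \<inter> J)}"

text \<open>F(U) with the maps F[I \<subseteq> U] (I in the family) is the colimit in Set
  of the coequalizer diagram: the induced map from the quotient of the disjoint union
  by the generated equivalence relation to F(U) is a bijection.\<close>
definition is_colimit_cover :: "(real set \<Rightarrow> 'a set) \<Rightarrow> (real set \<Rightarrow> real set \<Rightarrow> 'a \<Rightarrow> 'a)
    \<Rightarrow> real set \<Rightarrow> real set set \<Rightarrow> bool" where
  "is_colimit_cover F Fm U \<J> \<longleftrightarrow>
     (\<forall>y\<in>F U. \<exists>I\<in>\<J>. \<exists>x\<in>F I. Fm I U x = y) \<and>
     (\<forall>I\<in>\<J>. \<forall>J\<in>\<J>. \<forall>x\<in>F I. \<forall>x'\<in>F J.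
        Fm I U x = Fm J U x' \<longleftrightarrow> ((I, x), (J, x')) \<in> (glue_rel F Fm \<J>)\<^sup>*)"

definition cosheaf :: "(real set \<Rightarrow> 'a set) \<Rightarrow> (real set \<Rightarrow> real set \<Rightarrow> 'a \<Rightarrow> 'a) \<Rightarrow> bool" where
  "cosheaf F Fm \<longleftrightarrow> precosheaf F Fm \<and>
     (\<forall>U \<J>. is_oint U \<and> (\<forall>I\<in>\<J>. is_oint I) \<and> \<Union>\<J> = U \<longrightarrow> is_colimit_cover F Fm U \<J>)"

definition constructible_wrt :: "(real set \<Rightarrow> 'a set) \<Rightarrow> (real set \<Rightarrow> real set \<Rightarrow> 'a \<Rightarrow> 'a)
    \<Rightarrow> real set \<Rightarrow> bool" where
  "constructible_wrt F Fm S \<longleftrightarrow> finite S \<and>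
     (\<forall>I. is_oint I \<longrightarrow> finite (F I)) \<and>
     (\<forall>I J. is_oint I \<and> is_oint J \<and> I \<subseteq> J \<and> I \<inter> S = J \<inter> S \<longrightarrow> bij_betw (Fm I J) (F I) (F J)) \<and>
     (\<forall>I. is_oint I \<and> ((\<forall>s\<in>S. I \<subseteq> {..<s}) \<or> (\<forall>s\<in>S. I \<subseteq> {s<..})) \<longrightarrow> F I = {})"

definition nat_trans :: "(real set \<Rightarrow> 'a set) \<Rightarrow> (real set \<Rightarrow> real set \<Rightarrow> 'a \<Rightarrow> 'a)
    \<Rightarrow> (real set \<Rightarrow> 'b set) \<Rightarrow> (real set \<Rightarrow> real set \<Rightarrow> 'b \<Rightarrow> 'b) \<Rightarrow> (real set \<Rightarrow> 'a \<Rightarrow> 'b) \<Rightarrow> bool" where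
  "nat_trans F Fm G Gm \<psi> \<longleftrightarrow>
     (\<forall>I. is_oint I \<longrightarrow> (\<forall>x\<in>F I. \<psi> I x \<in> G I)) \<and>
     (\<forall>I J. is_oint I \<and> is_oint J \<and> I \<subseteq> J \<longrightarrow> (\<forall>x\<in>F I. \<psi> J (Fm I J x) = Gm I J (\<psi> I x)))"

definition nat_iso :: "(real set \<Rightarrow> 'a set) \<Rightarrow> (real set \<Rightarrow> real set \<Rightarrow> 'a \<Rightarrow> 'a)
    \<Rightarrow> (real set \<Rightarrow> 'b set) \<Rightarrow> (real set \<Rightarrow> real set \<Rightarrow> 'b \<Rightarrow> 'b) \<Rightarrow> (real set \<Rightarrow> 'a \<Rightarrow> 'b) \<Rightarrow> bool" where
  "nat_iso F Fm G Gm \<psi> \<longleftrightarrow> nat_trans F Fm G Gm \<psi> \<and>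
     (\<exists>\<phi>. nat_trans G Gm F Fm \<phi> \<and>
        (\<forall>I. is_oint I \<longrightarrow> (\<forall>x\<in>F I. \<phi> I (\<psi> I x) = x) \<and> (\<forall>y\<in>G I. \<psi> I (\<phi> I y) = y)))"

text \<open>Endpoint a_k of the extended list a_{-1} = -\<infinity>, a_0, ..., a_n, a_{n+1} = +\<infinity>.\<close>
definition bnd :: "(nat \<Rightarrow> real) \<Rightarrow> nat \<Rightarrow> int \<Rightarrow> ereal" where
  "bnd a n k = (if k < 0 then -\<infinity> else if k > int n then \<infinity> else ereal (a (nat k)))"

end

theory Submission
  imports Defs
begin

text \<open>
  A natural transformation whose components are all bijections is a natural isomorphism, since
  the componentwise inverse is automatically natural. By constructibility, bijectivity of a
  component descends from J to every open interval I \<subseteq> J containing the same critical points.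
  An interval containing the critical points a_p, ..., a_q (and no others) lies in the hull
  (a_{p-1}, a_{q+1}); one containing none lies in a gap (a_i, a_{i+1}), or else both cosheaves
  vanish on it. The gaps are among the hypotheses, and the hulls follow by induction on q: the hull
  (a_{p-1}, a_{q+2}) is the union of (a_{p-1}, a_{q+1}) and the star (a_q, a_{q+2}), which
  intersect in the gap (a_q, a_{q+1}), and the cosheaf condition glues bijections along such a cover.
\<close>

abbreviation component_bij ::
    "(real set \<Rightarrow> 'a set) \<Rightarrow> (real set \<Rightarrow> 'b set) \<Rightarrow> (real set \<Rightarrow> 'a \<Rightarrow> 'b) \<Rightarrow> real set \<Rightarrow> bool" where
  "component_bij F G \<psi> I \<equiv> bij_betw (\<psi> I) (F I) (G I)"

subsection \<open>Open intervals\<close>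

lemma is_oint_oint [simp]: "is_oint (oint l u)"
  unfolding is_oint_def by blast

lemma oint_Int: "oint l u \<inter> oint l' u' = oint (max l l') (min u u')"
  unfolding oint_def by auto

lemma is_oint_Int: "is_oint I \<Longrightarrow> is_oint J \<Longrightarrow> is_oint (I \<inter> J)"
  unfolding is_oint_def using oint_Int by blast

lemma oint_Un:
  assumes "l \<le> l'" "l' < u" "u \<le> u'"
  shows "oint l u \<union> oint l' u' = oint l u'"
proof -
  have "x \<in> oint l u \<or> x \<in> oint l' u'" if "x \<in> oint l u'" for x
    using that assms(2) unfolding oint_def by (cases "ereal x < u") (auto intro: less_le_trans)
  moreover have "oint l u \<subseteq> oint l u'" "oint l' u' \<subseteq> oint l u'"
    using assms unfolding oint_def by (auto intro: less_le_trans le_less_trans)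
  ultimately show ?thesis by blast
qed

lemma is_oint_convex:
  assumes "is_oint I" "x \<in> I" "z \<in> I" "x \<le> y" "y \<le> z"
  shows "y \<in> I"
proof -
  obtain l u where I: "I = oint l u" using assms(1) unfolding is_oint_def by blast
  have "l < ereal x" "ereal z < u" using assms(2,3) I unfolding oint_def by auto
  moreover have "ereal x \<le> ereal y" "ereal y \<le> ereal z" using assms(4,5) by auto
  ultimately have "l < ereal y" "ereal y < u" by (blast intro: less_le_trans le_less_trans)+
  then show ?thesis using I unfolding oint_def by simp
qed

lemma is_oint_subset_oint:
  assumes I: "is_oint I" and x: "x \<in> I" "l < ereal x" "ereal x < u"
    and gaps: "l \<notin> ereal ` I" "u \<notin> ereal ` I"
  shows "I \<subseteq> oint l u"
proof
  fix w assume w: "w \<in> I"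
  have "l < ereal w"
  proof (cases l)
    case (real c)
    have "c \<notin> I" using gaps(1) real by blast
    then have "\<not> w \<le> c" using is_oint_convex[OF I w x(1), of c] x(2) real by auto
    then show ?thesis using real by simp
  qed (use x in auto)
  moreover have "ereal w < u"
  proof (cases u)
    case (real c)
    have "c \<notin> I" using gaps(2) real by blast
    then have "\<not> c \<le> w" using is_oint_convex[OF I x(1) w, of c] x(3) real by auto
    then show ?thesis using real by simp
  qed (use x in auto)
  ultimately show "w \<in> oint l u" unfolding oint_def by simp
qed

subsection \<open>The critical points\<close>

lemma strict_mono_on_atMost_Suc:
  assumes "\<forall>i<n. f i < f (Suc i)"
  shows "strict_mono_on {..n} (f :: nat \<Rightarrow> 'a :: order)"
proof (rule strict_mono_onI)
  fix i j assume "i \<in> {..n}" "j \<in> {..n}" "i < j"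
  then show "f i < f j"
  proof (induction j)
    case (Suc j)
    then show ?case using assms by (cases "i = j") (auto intro: less_trans)
  qed simp
qed

lemma bnd_eq_ereal: "k \<le> n \<Longrightarrow> bnd a n (int k) = ereal (a k)"
  unfolding bnd_def by simp

lemma bnd_strict_mono:
  assumes "strict_mono_on {..n} a"
  shows "strict_mono_on {-1..int n + 1} (bnd a n)"
proof (rule strict_mono_onI)
  fix x y assume "x \<in> {-1..int n + 1}" "y \<in> {-1..int n + 1}" "x < y"
  then have "-1 \<le> x" "y \<le> int n + 1" by auto
  with \<open>x < y\<close> consider "x < 0" "0 \<le> y" | "0 \<le> x" "int n < y" | "0 \<le> x" "y \<le> int n"
    by linarith
  then show "bnd a n x < bnd a n y"
  proof cases
    case 3
    then have "a (nat x) < a (nat y)" using assms \<open>x < y\<close> by (simp add: strict_mono_onD)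
    then show ?thesis using 3 \<open>x < y\<close> unfolding bnd_def by simp
  qed (use \<open>x < y\<close> \<open>y \<le> int n + 1\<close> in \<open>auto simp: bnd_def\<close>)
qed

lemma critical_in_oint_bnd_iff:
  assumes "strict_mono_on {..n} a" "k \<le> n" "x \<in> {-1..int n + 1}" "y \<in> {-1..int n + 1}"
  shows "a k \<in> oint (bnd a n x) (bnd a n y) \<longleftrightarrow> x < int k \<and> int k < y"
proof -
  have "int k \<in> {-1..int n + 1}" using assms(2) by simp
  then show ?thesis
    using strict_mono_on_less[OF bnd_strict_mono[OF assms(1)]] assms(3,4)
    by (simp add: oint_def bnd_eq_ereal[OF assms(2), symmetric])
qed

lemma bnd_notin_ereal_image:
  assumes "0 \<le> k \<Longrightarrow> k \<le> int n \<Longrightarrow> a (nat k) \<notin> I"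
  shows "bnd a n k \<notin> ereal ` I"
  using assms unfolding bnd_def by auto

lemma oint_critical_hull:
  fixes a :: "nat \<Rightarrow> real"
  assumes mono: "strict_mono_on {..n} a" and I: "is_oint I" and "k \<le> n" "a k \<in> I"
  obtains p q where "p \<le> q" "q \<le> n"
    "I \<subseteq> oint (bnd a n (int p - 1)) (bnd a n (int q + 1))"
    "I \<inter> a ` {..n} = oint (bnd a n (int p - 1)) (bnd a n (int q + 1)) \<inter> a ` {..n}"
proof -
  define K where "K = {j. j \<le> n \<and> a j \<in> I}"
  define p where "p = Min K"
  define q where "q = Max K"
  define J where "J = oint (bnd a n (int p - 1)) (bnd a n (int q + 1))"
  have "finite K" "K \<noteq> {}" using assms(3,4) unfolding K_def by auto
  then have K: "p \<in> K" "q \<in> K" "\<And>j. j \<in> K \<Longrightarrow> p \<le> j \<and> j \<le> q"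
    unfolding p_def q_def by auto
  then have pq: "p \<le> q" "q \<le> n" unfolding K_def by auto
  have in_I: "a j \<in> I \<longleftrightarrow> p \<le> j \<and> j \<le> q" if "j \<le> n" for j
  proof
    assume "p \<le> j \<and> j \<le> q"
    then have "a p \<le> a j" "a j \<le> a q"
      using that pq strict_mono_on_leD[OF mono] by auto
    then show "a j \<in> I" using is_oint_convex[OF I] K(1,2) unfolding K_def by blast
  qed (use that K(3) in \<open>auto simp: K_def\<close>)
  have in_J: "a j \<in> J \<longleftrightarrow> p \<le> j \<and> j \<le> q" if "j \<le> n" for j
    unfolding J_def using critical_in_oint_bnd_iff[OF mono that] pq by auto
  have "I \<subseteq> J"
    unfolding J_def
  proof (rule is_oint_subset_oint[OF I])
    show "a p \<in> I" using K(1) unfolding K_def by simp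
    show "bnd a n (int p - 1) < ereal (a p)" "ereal (a p) < bnd a n (int q + 1)"
      using critical_in_oint_bnd_iff[OF mono, of p "int p - 1" "int q + 1"] pq
      by (simp_all add: oint_def)
    show "bnd a n (int p - 1) \<notin> ereal ` I" "bnd a n (int q + 1) \<notin> ereal ` I"
      using in_I by (auto intro!: bnd_notin_ereal_image)
  qed
  moreover have "I \<inter> a ` {..n} = J \<inter> a ` {..n}" using in_I in_J by auto
  ultimately show ?thesis using that pq unfolding J_def by blast
qed

lemma oint_critical_gap:
  fixes a :: "nat \<Rightarrow> real"
  assumes mono: "strict_mono_on {..n} a" and I: "is_oint I" and no_crit: "I \<inter> a ` {..n} = {}"
    and x: "x \<in> I" "a 0 < x" and y: "y \<in> I" "y < a n"
  obtains i where "i < n" "I \<subseteq> oint (bnd a n (int i)) (bnd a n (int i + 1))"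
proof -
  define i where "i = Max {k. k \<le> n \<and> a k < x}"
  have fin: "finite {k. k \<le> n \<and> a k < x}" by simp
  moreover have "0 \<in> {k. k \<le> n \<and> a k < x}" using x(2) by simp
  ultimately have "i \<in> {k. k \<le> n \<and> a k < x}" unfolding i_def using Max_in by blast
  then have i: "i \<le> n" "a i < x" "\<And>k. k \<le> n \<Longrightarrow> a k < x \<Longrightarrow> k \<le> i"
    unfolding i_def using Max_ge[OF fin] by auto
  have "i \<noteq> n"
  proof
    assume "i = n"
    then have "a n \<in> I" using is_oint_convex[OF I y(1) x(1)] y(2) i(2) by simp
    then show False using no_crit by blast
  qed
  then have "i < n" using i(1) by simp
  moreover have "x < a (Suc i)"
  proof -
    have "x \<le> a (Suc i)" using i(3)[of "Suc i"] \<open>i < n\<close> by fastforce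
    moreover have "a (Suc i) \<noteq> x" using no_crit x(1) \<open>i < n\<close> by auto
    ultimately show ?thesis by simp
  qed
  moreover have "I \<subseteq> oint (bnd a n (int i)) (bnd a n (int i + 1))"
  proof (rule is_oint_subset_oint[OF I x(1)])
    show "bnd a n (int i) < ereal x" "ereal x < bnd a n (int i + 1)"
      using i(1,2) \<open>x < a (Suc i)\<close> \<open>i < n\<close> bnd_eq_ereal[of "Suc i" n a]
      by (simp_all add: bnd_eq_ereal add.commute)
    show "bnd a n (int i) \<notin> ereal ` I" "bnd a n (int i + 1) \<notin> ereal ` I"
      using no_crit by (auto intro!: bnd_notin_ereal_image)
  qed
  ultimately show ?thesis using that by blast
qed

subsection \<open>Morphisms of cosheaves\<close>

lemma precosheaf_map_in:
  "precosheaf F Fm \<Longrightarrow> is_oint I \<Longrightarrow> is_oint J \<Longrightarrow> I \<subseteq> J \<Longrightarrow> x \<in> F I \<Longrightarrow> Fm I J x \<in> F J"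
  by (simp add: precosheaf_def)

lemma nat_trans_in: "nat_trans F Fm G Gm \<psi> \<Longrightarrow> is_oint I \<Longrightarrow> x \<in> F I \<Longrightarrow> \<psi> I x \<in> G I"
  by (simp add: nat_trans_def)

lemma nat_trans_commute:
  "nat_trans F Fm G Gm \<psi> \<Longrightarrow> is_oint I \<Longrightarrow> is_oint J \<Longrightarrow> I \<subseteq> J \<Longrightarrow> x \<in> F I \<Longrightarrow>
    \<psi> J (Fm I J x) = Gm I J (\<psi> I x)"
  by (simp add: nat_trans_def)

lemma cosheaf_precosheaf: "cosheaf F Fm \<Longrightarrow> precosheaf F Fm"
  by (simp add: cosheaf_def)

lemma cosheaf_colimit:
  "cosheaf F Fm \<Longrightarrow> is_oint (\<Union>\<J>) \<Longrightarrow> \<forall>I\<in>\<J>. is_oint I \<Longrightarrow> is_colimit_cover F Fm (\<Union>\<J>) \<J>"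
  by (simp add: cosheaf_def)

lemma is_colimit_coverE:
  assumes "is_colimit_cover F Fm U \<J>" "y \<in> F U"
  obtains I x where "I \<in> \<J>" "x \<in> F I" "y = Fm I U x"
  using assms unfolding is_colimit_cover_def by metis

lemma is_colimit_cover_eq_iff:
  "is_colimit_cover F Fm U \<J> \<Longrightarrow> I \<in> \<J> \<Longrightarrow> J \<in> \<J> \<Longrightarrow> x \<in> F I \<Longrightarrow> y \<in> F J \<Longrightarrow>
    Fm I U x = Fm J U y \<longleftrightarrow> ((I, x), (J, y)) \<in> (glue_rel F Fm \<J>)\<^sup>*"
  unfolding is_colimit_cover_def by blast

lemma constructible_bij:
  "constructible_wrt F Fm S \<Longrightarrow> is_oint I \<Longrightarrow> is_oint J \<Longrightarrow> I \<subseteq> J \<Longrightarrow> I \<inter> S = J \<inter> S \<Longrightarrow>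
    bij_betw (Fm I J) (F I) (F J)"
  by (simp add: constructible_wrt_def)

lemma constructible_empty:
  "constructible_wrt F Fm S \<Longrightarrow> is_oint I \<Longrightarrow> (\<forall>s\<in>S. I \<subseteq> {..<s}) \<or> (\<forall>s\<in>S. I \<subseteq> {s<..}) \<Longrightarrow>
    F I = {}"
  by (simp add: constructible_wrt_def)

lemma bij_betw_of_commuting_square:
  assumes "bij_betw h A A'" "bij_betw g A' B'" "bij_betw k B B'" "f ` A \<subseteq> B"
    and "\<And>x. x \<in> A \<Longrightarrow> k (f x) = g (h x)"
  shows "bij_betw f A B"
proof -
  have "bij_betw (g \<circ> h) A B'" using assms(1,2) by (rule bij_betw_trans)
  then have "bij_betw (k \<circ> f) A B'" using bij_betw_cong[of A "k \<circ> f" "g \<circ> h" B'] assms(5) by simp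
  then show ?thesis using bij_betw_comp_iff2[OF assms(3,4)] by simp
qed

lemma constructible_component_bij_subset:
  assumes cF: "constructible_wrt F Fm S" and cG: "constructible_wrt G Gm S"
    and \<psi>: "nat_trans F Fm G Gm \<psi>" and I: "is_oint I" and J: "is_oint J"
    and "I \<subseteq> J" "I \<inter> S = J \<inter> S" "component_bij F G \<psi> J"
  shows "component_bij F G \<psi> I"
proof (rule bij_betw_of_commuting_square)
  show "bij_betw (Fm I J) (F I) (F J)" "bij_betw (Gm I J) (G I) (G J)"
    using constructible_bij[OF cF I J] constructible_bij[OF cG I J] assms(6,7) by auto
  show "\<psi> I ` F I \<subseteq> G I" using nat_trans_in[OF \<psi> I] by blast
  show "\<And>x. x \<in> F I \<Longrightarrow> Gm I J (\<psi> I x) = \<psi> J (Fm I J x)"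
    using nat_trans_commute[OF \<psi> I J \<open>I \<subseteq> J\<close>] by simp
qed fact

lemma glue_rel_lift:
  assumes pF: "precosheaf F Fm" and \<psi>: "nat_trans F Fm G Gm \<psi>" and \<J>: "\<forall>I\<in>\<J>. is_oint I"
    and bij: "\<And>I J. I \<in> \<J> \<Longrightarrow> J \<in> \<J> \<Longrightarrow> component_bij F G \<psi> (I \<inter> J)"
    and chain: "((I, \<psi> I x), (K, v)) \<in> (glue_rel G Gm \<J>)\<^sup>*" and x: "x \<in> F I"
  shows "\<exists>x'\<in>F K. v = \<psi> K x' \<and> ((I, x), (K, x')) \<in> (glue_rel F Fm \<J>)\<^sup>*"
  using chain
proof (induction K v rule: rtrancl_induct2)
  case refl
  then show ?case using x by auto
next
  case (step K v K' v')
  from step.hyps(2) obtain J z where J: "K \<in> \<J>" "J \<in> \<J>" "z \<in> G (K \<inter> J)"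
    and v: "v = Gm (K \<inter> J) K z" and v': "K' = J" "v' = Gm (K \<inter> J) J z"
    unfolding glue_rel_def by blast
  from step.IH obtain y where y: "y \<in> F K" "v = \<psi> K y"
    and y_chain: "((I, x), (K, y)) \<in> (glue_rel F Fm \<J>)\<^sup>*" by blast
  obtain w where w: "w \<in> F (K \<inter> J)" "z = \<psi> (K \<inter> J) w"
    using bij[OF J(1,2)] J(3) unfolding bij_betw_def by blast
  have K: "is_oint K" "is_oint J" "is_oint (K \<inter> J)" using \<J> J(1,2) is_oint_Int by auto
  have "\<psi> K y = \<psi> K (Fm (K \<inter> J) K w)"
    using y(2) v w nat_trans_commute[OF \<psi> K(3,1) _ w(1)] by simp
  moreover have "Fm (K \<inter> J) K w \<in> F K" using precosheaf_map_in[OF pF K(3,1) _ w(1)] by simp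
  moreover have "inj_on (\<psi> K) (F K)" using bij[OF J(1,1)] by (simp add: bij_betw_def)
  ultimately have "y = Fm (K \<inter> J) K w" using y(1) by (simp add: inj_on_eq_iff)
  then have "((K, y), (J, Fm (K \<inter> J) J w)) \<in> glue_rel F Fm \<J>"
    unfolding glue_rel_def using J(1,2) w(1) by blast
  then have "((I, x), (J, Fm (K \<inter> J) J w)) \<in> (glue_rel F Fm \<J>)\<^sup>*"
    using y_chain by simp
  moreover have "v' = \<psi> J (Fm (K \<inter> J) J w)"
    using v'(2) w nat_trans_commute[OF \<psi> K(3,2) _ w(1)] by simp
  moreover have "Fm (K \<inter> J) J w \<in> F J" using precosheaf_map_in[OF pF K(3,2) _ w(1)] by simp
  ultimately show ?case using v'(1) by blast
qed

text \<open>
  Surjectivity is read off the generators of the colimit; for injectivity, the zig-zag of gluing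
  steps in G identifying the images of two elements lifts to a zig-zag in F.
\<close>

lemma cosheaf_component_bij_Union:
  assumes cF: "cosheaf F Fm" and cG: "cosheaf G Gm" and \<psi>: "nat_trans F Fm G Gm \<psi>"
    and U: "is_oint (\<Union>\<J>)" and \<J>: "\<forall>I\<in>\<J>. is_oint I"
    and bij: "\<And>I J. I \<in> \<J> \<Longrightarrow> J \<in> \<J> \<Longrightarrow> component_bij F G \<psi> (I \<inter> J)"
  shows "component_bij F G \<psi> (\<Union>\<J>)"
proof -
  let ?U = "\<Union>\<J>"
  have pF: "precosheaf F Fm" using cF by (rule cosheaf_precosheaf)
  have colF: "is_colimit_cover F Fm ?U \<J>" and colG: "is_colimit_cover G Gm ?U \<J>"
    using cosheaf_colimit[OF cF U \<J>] cosheaf_colimit[OF cG U \<J>] .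
  have bij_I: "component_bij F G \<psi> I" if "I \<in> \<J>" for I
    using bij[OF that that] by simp
  have commute: "\<psi> ?U (Fm I ?U x) = Gm I ?U (\<psi> I x)" if "I \<in> \<J>" "x \<in> F I" for I x
    using nat_trans_commute[OF \<psi> _ U] \<J> that by blast
  have "G ?U \<subseteq> \<psi> ?U ` F ?U"
  proof
    fix y assume "y \<in> G ?U"
    then obtain I z where I: "I \<in> \<J>" "z \<in> G I" "y = Gm I ?U z"
      using colG by (blast elim: is_colimit_coverE)
    then obtain x where x: "x \<in> F I" "z = \<psi> I x" using bij_I[OF I(1)] by (auto simp: bij_betw_def)
    have "Fm I ?U x \<in> F ?U" using precosheaf_map_in[OF pF _ U] \<J> I(1) x(1) by blast
    then show "y \<in> \<psi> ?U ` F ?U" using commute[OF I(1) x(1)] I(3) x(2) by force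
  qed
  moreover have "inj_on (\<psi> ?U) (F ?U)"
  proof (rule inj_onI)
    fix u v assume "u \<in> F ?U" "v \<in> F ?U" and eq: "\<psi> ?U u = \<psi> ?U v"
    then obtain I x J y where I: "I \<in> \<J>" "x \<in> F I" "u = Fm I ?U x"
      and J: "J \<in> \<J>" "y \<in> F J" "v = Fm J ?U y"
      using colF by (meson is_colimit_coverE)
    have "\<psi> I x \<in> G I" "\<psi> J y \<in> G J" using bij_I I J by (auto simp: bij_betw_def)
    moreover have "Gm I ?U (\<psi> I x) = Gm J ?U (\<psi> J y)" using eq commute I J by metis
    ultimately have "((I, \<psi> I x), (J, \<psi> J y)) \<in> (glue_rel G Gm \<J>)\<^sup>*"
      using is_colimit_cover_eq_iff[OF colG I(1) J(1)] by blast
    then obtain y' where y': "y' \<in> F J" "\<psi> J y = \<psi> J y'"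
      and chain: "((I, x), (J, y')) \<in> (glue_rel F Fm \<J>)\<^sup>*"
      using glue_rel_lift[OF pF \<psi> \<J> bij _ I(2)] by blast
    have "y = y'" using bij_I[OF J(1)] y' J(2) by (auto simp: bij_betw_def inj_on_eq_iff)
    then show "u = v" using is_colimit_cover_eq_iff[OF colF I(1) J(1) I(2) J(2)] I J chain by blast
  qed
  ultimately show ?thesis using nat_trans_in[OF \<psi> U] by (auto simp: bij_betw_def)
qed

lemma component_bij_critical_hull:
  assumes cF: "cosheaf F Fm" and cG: "cosheaf G Gm" and \<psi>: "nat_trans F Fm G Gm \<psi>"
    and mono: "strict_mono_on {..n} a"
    and star: "\<And>i. i \<le> n \<Longrightarrow> component_bij F G \<psi> (oint (bnd a n (int i - 1)) (bnd a n (int i + 1)))"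
    and gap: "\<And>i. i < n \<Longrightarrow> component_bij F G \<psi> (oint (bnd a n (int i)) (bnd a n (int i + 1)))"
    and "p \<le> q" "q \<le> n"
  shows "component_bij F G \<psi> (oint (bnd a n (int p - 1)) (bnd a n (int q + 1)))"
  using \<open>p \<le> q\<close> \<open>q \<le> n\<close>
proof (induction q rule: dec_induct)
  case base
  then show ?case using star by simp
next
  case (step k)
  let ?b = "bnd a n"
  define A where "A = oint (?b (int p - 1)) (?b (int k + 1))"
  define B where "B = oint (?b (int k)) (?b (int k + 2))"
  have b_mono: "strict_mono_on {-1..int n + 1} ?b" using mono by (rule bnd_strict_mono)
  have le: "?b (int p - 1) \<le> ?b (int k)" "?b (int k) < ?b (int k + 1)" "?b (int k + 1) \<le> ?b (int k + 2)"
    using strict_mono_on_leD[OF b_mono] strict_mono_onD[OF b_mono] step by auto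
  have "A \<union> B = oint (?b (int p - 1)) (?b (int (Suc k) + 1))"
    unfolding A_def B_def using oint_Un[OF le] by (simp add: add.commute)
  moreover have "A \<inter> B = oint (?b (int k)) (?b (int k + 1))"
    unfolding A_def B_def oint_Int using le by (simp add: max_def min_def)
  moreover have "component_bij F G \<psi> A" "component_bij F G \<psi> B"
    using step star[of "Suc k"] unfolding A_def B_def by (simp_all add: add.commute)
  moreover have "component_bij F G \<psi> (oint (?b (int k)) (?b (int k + 1)))"
    using gap step by simp
  ultimately have "component_bij F G \<psi> (\<Union>{A, B})"
    by (intro cosheaf_component_bij_Union[OF cF cG \<psi>]) (auto simp: A_def B_def Int_commute)
  then show ?case using \<open>A \<union> B = _\<close> by simp
qed

lemma constructible_component_bij_all:
  fixes a :: "nat \<Rightarrow> real"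
  assumes cF: "constructible_wrt F Fm (a ` {..n})" and cG: "constructible_wrt G Gm (a ` {..n})"
    and \<psi>: "nat_trans F Fm G Gm \<psi>" and mono: "strict_mono_on {..n} a"
    and hull: "\<And>p q. p \<le> q \<Longrightarrow> q \<le> n \<Longrightarrow>
      component_bij F G \<psi> (oint (bnd a n (int p - 1)) (bnd a n (int q + 1)))"
    and gap: "\<And>i. i < n \<Longrightarrow> component_bij F G \<psi> (oint (bnd a n (int i)) (bnd a n (int i + 1)))"
    and I: "is_oint I"
  shows "component_bij F G \<psi> I"
proof -
  let ?S = "a ` {..n}"
  have transport: "component_bij F G \<psi> I"
    if "I \<subseteq> J" "I \<inter> ?S = J \<inter> ?S" "component_bij F G \<psi> J" "is_oint J" for J
    using constructible_component_bij_subset[OF cF cG \<psi> I] that by blast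
  consider (critical) k where "k \<le> n" "a k \<in> I"
    | (outside) "(\<forall>s\<in>?S. I \<subseteq> {..<s}) \<or> (\<forall>s\<in>?S. I \<subseteq> {s<..})"
    | (between) x y where "I \<inter> ?S = {}" "x \<in> I" "a 0 < x" "y \<in> I" "y < a n"
  proof (cases "\<exists>k\<le>n. a k \<in> I")
    case False
    then have no_crit: "I \<inter> ?S = {}" by auto
    show thesis
    proof (cases "(\<forall>s\<in>?S. I \<subseteq> {..<s}) \<or> (\<forall>s\<in>?S. I \<subseteq> {s<..})")
      case False
      then obtain j x j' y where "j \<le> n" "x \<in> I" "a j \<le> x" "j' \<le> n" "y \<in> I" "y \<le> a j'"
        by (auto simp: subset_iff not_less)
      moreover have "a 0 \<le> a j" "a j' \<le> a n" using \<open>j \<le> n\<close> \<open>j' \<le> n\<close> strict_mono_on_leD[OF mono] by auto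
      moreover have "a 0 \<notin> I" "a n \<notin> I" using no_crit by auto
      ultimately show thesis using that(3)[OF no_crit] by (metis order.strict_iff_order order.trans)
    qed (use that(2) in blast)
  qed (use that(1) in blast)
  then show ?thesis
  proof cases
    case critical
    then show ?thesis using oint_critical_hull[OF mono I] hull transport by (metis is_oint_oint)
  next
    case outside
    then show ?thesis
      using constructible_empty[OF cF I] constructible_empty[OF cG I] by (simp add: bij_betw_def)
  next
    case between
    then obtain i where "i < n" "I \<subseteq> oint (bnd a n (int i)) (bnd a n (int i + 1))"
      using oint_critical_gap[OF mono I] by metis
    moreover have "oint (bnd a n (int i)) (bnd a n (int i + 1)) \<inter> ?S = {}"
      using critical_in_oint_bnd_iff[OF mono] \<open>i < n\<close> by auto
    ultimately show ?thesis using between(1) gap transport by (metis is_oint_oint)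
  qed
qed

lemma nat_isoI:
  assumes "precosheaf F Fm" and \<psi>: "nat_trans F Fm G Gm \<psi>"
    and bij: "\<And>I. is_oint I \<Longrightarrow> component_bij F G \<psi> I"
  shows "nat_iso F Fm G Gm \<psi>"
proof -
  define \<phi> where "\<phi> I = the_inv_into (F I) (\<psi> I)" for I
  have \<phi>: "bij_betw (\<phi> I) (G I) (F I)"
    and \<phi>_\<psi>: "\<And>x. x \<in> F I \<Longrightarrow> \<phi> I (\<psi> I x) = x"
    and \<psi>_\<phi>: "\<And>y. y \<in> G I \<Longrightarrow> \<psi> I (\<phi> I y) = y" if "is_oint I" for I
    using bij[OF that] unfolding \<phi>_def
    by (auto simp: bij_betw_the_inv_into f_the_inv_into_f_bij_betw
        intro: the_inv_into_f_f bij_betw_imp_inj_on)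
  have natural: "\<phi> J (Gm I J y) = Fm I J (\<phi> I y)"
    if "is_oint I" "is_oint J" "I \<subseteq> J" "y \<in> G I" for I J y
  proof -
    have x: "\<phi> I y \<in> F I" using \<phi>[OF that(1)] that(4) by (auto simp: bij_betw_def)
    have "Gm I J y = \<psi> J (Fm I J (\<phi> I y))"
      using nat_trans_commute[OF \<psi> that(1-3) x] \<psi>_\<phi>[OF that(1,4)] by simp
    then show ?thesis using \<phi>_\<psi>[OF that(2) precosheaf_map_in[OF assms(1) that(1-3) x]] by simp
  qed
  have "nat_trans G Gm F Fm \<phi>"
    unfolding nat_trans_def using \<phi> natural by (blast intro: bij_betw_apply)
  then show ?thesis unfolding nat_iso_def using \<psi> \<phi>_\<psi> \<psi>_\<phi> by blast
qed

theorem mainTheorem5: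
  fixes F :: "real set \<Rightarrow> 'a set" and Fm :: "real set \<Rightarrow> real set \<Rightarrow> 'a \<Rightarrow> 'a"
    and G :: "real set \<Rightarrow> 'b set" and Gm :: "real set \<Rightarrow> real set \<Rightarrow> 'b \<Rightarrow> 'b"
    and \<psi> :: "real set \<Rightarrow> 'a \<Rightarrow> 'b"
    and a :: "nat \<Rightarrow> real" and n :: nat
  assumes "cosheaf F Fm" and "cosheaf G Gm"
    and "\<forall>i<n. a i < a (Suc i)"
    and "constructible_wrt F Fm (a ` {0..n})" and "constructible_wrt G Gm (a ` {0..n})"
    and "nat_trans F Fm G Gm \<psi>"
    and "\<forall>i::int. 0 \<le> i \<and> i \<le> int n \<longrightarrow>
           bij_betw (\<psi> (oint (bnd a n (i - 1)) (bnd a n (i + 1))))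
                    (F (oint (bnd a n (i - 1)) (bnd a n (i + 1))))
                    (G (oint (bnd a n (i - 1)) (bnd a n (i + 1))))"
    and "\<forall>i::int. 0 \<le> i \<and> i \<le> int n - 1 \<longrightarrow>
           bij_betw (\<psi> (oint (bnd a n i) (bnd a n (i + 1))))
                    (F (oint (bnd a n i) (bnd a n (i + 1))))
                    (G (oint (bnd a n i) (bnd a n (i + 1))))"
  shows "nat_iso F Fm G Gm \<psi>"
proof -
  have mono: "strict_mono_on {..n} a" using assms(3) by (rule strict_mono_on_atMost_Suc)
  have star: "component_bij F G \<psi> (oint (bnd a n (int i - 1)) (bnd a n (int i + 1)))"
    if "i \<le> n" for i
    using assms(7) that by simp
  have gap: "component_bij F G \<psi> (oint (bnd a n (int i)) (bnd a n (int i + 1)))"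
    if "i < n" for i
    using assms(8) that by simp
  note hull = component_bij_critical_hull[OF assms(1,2,6) mono star gap]
  show ?thesis
  proof (rule nat_isoI[OF cosheaf_precosheaf[OF assms(1)] assms(6)])
    fix I assume "is_oint I"
    then show "component_bij F G \<psi> I"
      using constructible_component_bij_all[OF _ _ assms(6) mono hull gap] assms(4,5)
      by (simp add: atLeast0AtMost)
  qed
qed

end
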